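(* Let $\mathcal{P}=\{\mathsf{R}\}$ with $\mathrm{ar}(\mathsf{R})=1$ and $[\![\mathsf{R}]\!]\subseteq\mathbb{N}$ rich. Let $n\in\mathbb{N}$ and let $\psi\in\mathrm{FOC}(\mathcal{P}\cup\{\mathsf{P}_\exists\})[\sigma_{\mathrm{tree}}]$ be a linear hnf-sentence such that for all $\mathcal{T}_n$-forests $\mathcal{F}$ we have $\mathcal{F}\models\psi\iff P_{[\![\mathsf{R}]\!]}(\mathcal{F})$. Then the number of distinct atomic numerical oc-type conditions of the form $\mathsf{R}(t)$ in $\psi$ is at least the number of non-empty sets $B\subseteq\mu(\mathcal{T}_n)$.
   Context: $\sigma_{\mathrm{tree}}=\{E_0,E_1,X\}$ with $E_0,E_1$ binary, $X$ unary. $\mathcal{T}_n$ is the set of all structures $T=(D,E_0,E_1,X)$ where $D$ is the set of binary words of length at most $2^n$, $E_b=\{(w,wb):wb\in D\}$ for $b\in\{0,1\}$, and $X\subseteq D$ arbitrary. $T$ is marked if the empty word $\varepsilon\in X$, unmarked otherwise; $\mu(T)$ is $T$ with $X$ replaced by $X\cup\{\varepsilon\}$, $\mu(\mathcal{T}_n)=\{\mu(T):T\in\mathcal{T}_n\}$. A $\mathcal{T}_n$-forest is a disjoint union of finitely many copies of trees from $\mathcal{T}_n$. For $R\subseteq\mathbb{N}$, $P_R(\mathcal{F})$ is the property: the number of unmarked trees $T$ (counted with multiplicity of copies) in $\mathcal{F}$ such that $\mu(T)$ also appears in $\mathcal{F}$ belongs to $R$. A set $R\subseteq\mathbb{N}$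 is rich if for all $s,u,v\in\mathbb{N}$, $\bar a_0\in\{0,1\}^s\setminus\{\bar0\}$, $\bar a_1,\dots,\bar a_u\in\mathbb{N}^s$, $c_1,\dots,c_u\in\mathbb{N}$ with $(\bar a_0,0)\ne(\bar a_i,c_i)$ for all $i$, there exist $\bar x,\bar y\in(v+\mathbb{N})^s$ with $\bar a_0^\top\bar x\in R\iff\bar a_0^\top\bar y\notin R$ and $\bar a_i^\top\bar x-c_i\in R\iff\bar a_i^\top\bar y-c_i\in R$ for all $i\in\{1,\dots,u\}$. $\mathsf{P}_\exists$ is the unary predicate with semantics $\{1,2,\dots\}$. $\mathrm{FOC}(\mathcal{Q})[\sigma]$: formulas and counting terms built from atomic first-order formulas, $\neg,\vee$, $\exists y$, $\mathsf{P}(t_1,\dots,t_m)$ (true iff the values of the counting terms lie in $[\![\mathsf{P}]\!]$), counting terms $\#\bar y.\varphi$ (number of tuples satisfying $\varphi$), integers, $+$, $\cdot$. A counting term is linear if it is an integer $i\in\mathbb{N}$ or of the form $\sum_{j=1}^m b_j\cdot\#(y).\varphi_j-b_0$ with $b_0,\dots,b_m\in\mathbb{N}$; a formula is linear if it only uses linear counting terms. An $r$-type with one centre is a structure with a distinguished element such that every element is within Gaifman distance $r$ of it (Gaifman graph: edges between distinct elements occurring together in a tuple); $\mathrm{sph}_\tau(y)$ is a first-order formula stating that the substructure induced on the elements within distance $r$ of $y$, centred at $y$, is isomorphic to $\tau$. Basic counting terms are $\#(y).\mathrm{sph}_\tau(y)$; simple counting terms are integer polynomials in them; atomic numerical oc-type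 conditions are $\mathsf{P}(t_1,\dots,t_m)$ with $\mathsf{P}\in\mathcal{P}\cup\{\mathsf{P}_\exists\}$ and simple counting terms $t_i$; a hnf-sentence of $\mathrm{FOC}(\mathcal{P}\cup\{\mathsf{P}_\exists\})$ is a Boolean combination of atomic numerical oc-type conditions. The number of distinct atomic numerical oc-type conditions of the form $\mathsf{R}(t)$ in $\psi$ is the number of distinct such conditions $\psi$ is a Boolean combination of. *)

theory Defs
  imports Main
begin

record 'a sstruct =
  univ :: "'a set"
  e0 :: "('a \<times> 'a) set"
  e1 :: "('a \<times> 'a) set"
  xs :: "'a set"

definition wf_struct :: "'a sstruct \<Rightarrow> bool" where
  "wf_struct A \<longleftrightarrow> finite (univ A) \<and> e0 A \<subseteq> univ A \<times> univ A
     \<and> e1 A \<subseteq> univ A \<times> univ A \<and> xs A \<subseteq> univ A"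

definition gaif :: "'a sstruct \<Rightarrow> ('a \<times> 'a) set" where
  "gaif A = {(u,v). u \<noteq> v \<and> ((u,v) \<in> e0 A \<union> e1 A \<or> (v,u) \<in> e0 A \<union> e1 A)}"

definition ball :: "'a sstruct \<Rightarrow> nat \<Rightarrow> 'a \<Rightarrow> 'a set" where
  "ball A r c = {y \<in> univ A. \<exists>k\<le>r. (c, y) \<in> (gaif A) ^^ k}"

definition induced :: "'a sstruct \<Rightarrow> 'a set \<Rightarrow> 'a sstruct" where
  "induced A S = \<lparr>univ = S, e0 = e0 A \<inter> S \<times> S, e1 = e1 A \<inter> S \<times> S, xs = xs A \<inter> S\<rparr>"

definition piso :: "'a sstruct \<Rightarrow> 'a \<Rightarrow> 'b sstruct \<Rightarrow> 'b \<Rightarrow> bool" where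
  "piso A c B d \<longleftrightarrow> (\<exists>f. bij_betw f (univ A) (univ B) \<and> f c = d
     \<and> (\<forall>x\<in>univ A. \<forall>y\<in>univ A. ((x,y) \<in> e0 A \<longleftrightarrow> (f x, f y) \<in> e0 B)
                               \<and> ((x,y) \<in> e1 A \<longleftrightarrow> (f x, f y) \<in> e1 B))
     \<and> (\<forall>x\<in>univ A. x \<in> xs A \<longleftrightarrow> f x \<in> xs B))"

text \<open>An r-type with one centre: (r, structure, centre), every element within
  Gaifman distance r of the centre.\<close>
type_synonym otype = "nat \<times> nat sstruct \<times> nat"

fun wf_type :: "otype \<Rightarrow> bool" where
  "wf_type (r, S, c) \<longleftrightarrow> wf_struct S \<and> c \<in> univ S \<and> univ S \<subseteq> ball S r c"

fun count_type :: "'a sstruct \<Rightarrow> otype \<Rightarrow> nat" where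
  "count_type A (r, S, c) = card {y \<in> univ A. piso (induced A (ball A r y)) y S c}"

text \<open>Linear simple counting terms: a natural number i, or
  sum_j b_j * #(y).sph_tau_j(y) - b_0.\<close>
datatype 't lterm = LConst nat | LSum "(nat \<times> 't) list" nat

datatype pred = PR | PEx

datatype 't hnf = Atom pred "'t lterm" | Neg "'t hnf" | Disj "'t hnf" "'t hnf"

fun lval :: "'a sstruct \<Rightarrow> otype lterm \<Rightarrow> int" where
  "lval A (LConst k) = int k"
| "lval A (LSum bs b0) = (\<Sum>(b, \<tau>)\<leftarrow>bs. int b * int (count_type A \<tau>)) - int b0"

definition inR :: "nat set \<Rightarrow> int \<Rightarrow> bool" where
  "inR R z \<longleftrightarrow> z \<ge> 0 \<and> nat z \<in> R"

fun hsat :: "nat set \<Rightarrow> 'a sstruct \<Rightarrow> otype hnf \<Rightarrow> bool" where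
  "hsat R A (Atom PR t) = inR R (lval A t)"
| "hsat R A (Atom PEx t) = (lval A t \<ge> 1)"
| "hsat R A (Neg \<phi>) = (\<not> hsat R A \<phi>)"
| "hsat R A (Disj \<phi> \<chi>) = (hsat R A \<phi> \<or> hsat R A \<chi>)"

definition wf_hnf :: "otype hnf \<Rightarrow> bool" where
  "wf_hnf \<psi> \<longleftrightarrow> (\<forall>\<tau>\<in>set_hnf \<psi>. wf_type \<tau>)"

fun atomsR :: "'t hnf \<Rightarrow> 't lterm set" where
  "atomsR (Atom PR t) = {t}"
| "atomsR (Atom PEx t) = {}"
| "atomsR (Neg \<phi>) = atomsR \<phi>"
| "atomsR (Disj \<phi> \<chi>) = atomsR \<phi> \<union> atomsR \<chi>"

text \<open>Types are identified up to isomorphism (types are isomorphism classes).\<close>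
fun tcls :: "otype \<Rightarrow> nat \<times> (nat sstruct \<times> nat) set" where
  "tcls (r, S, c) = (r, {(S', c'). piso S' c' S c})"

definition num_R_conditions :: "otype hnf \<Rightarrow> nat" where
  "num_R_conditions \<psi> = card (map_lterm tcls ` atomsR \<psi>)"

definition dotp :: "nat \<Rightarrow> (nat \<Rightarrow> nat) \<Rightarrow> (nat \<Rightarrow> nat) \<Rightarrow> int" where
  "dotp s a x = (\<Sum>j<s. int (a j) * int (x j))"

definition rich :: "nat set \<Rightarrow> bool" where
  "rich R \<longleftrightarrow> (\<forall>s u v (a :: nat \<Rightarrow> nat \<Rightarrow> nat) (c :: nat \<Rightarrow> nat).
     (\<forall>j<s. a 0 j \<le> 1) \<and> (\<exists>j<s. a 0 j \<noteq> 0)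
     \<and> (\<forall>i\<in>{1..u}. (\<exists>j<s. a 0 j \<noteq> a i j) \<or> c i \<noteq> 0)
     \<longrightarrow> (\<exists>x y :: nat \<Rightarrow> nat. (\<forall>j<s. v \<le> x j \<and> v \<le> y j)
           \<and> (inR R (dotp s (a 0) x) \<longleftrightarrow> \<not> inR R (dotp s (a 0) y))
           \<and> (\<forall>i\<in>{1..u}. inR R (dotp s (a i) x - int (c i))
                            \<longleftrightarrow> inR R (dotp s (a i) y - int (c i)))))"

definition Dn :: "nat \<Rightarrow> bool list set" where
  "Dn n = {w. length w \<le> 2 ^ n}"

text \<open>Bit 0 is False, bit 1 is True.\<close>
definition tree :: "nat \<Rightarrow> bool list set \<Rightarrow> bool list sstruct" where
  "tree n X = \<lparr>univ = Dn n,
     e0 = {(w, w @ [False]) | w. w @ [False] \<in> Dn n},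
     e1 = {(w, w @ [True]) | w. w @ [True] \<in> Dn n},
     xs = X\<rparr>"

definition Tn :: "nat \<Rightarrow> bool list sstruct set" where
  "Tn n = {tree n X | X. X \<subseteq> Dn n}"

definition marked :: "bool list sstruct \<Rightarrow> bool" where
  "marked T \<longleftrightarrow> [] \<in> xs T"

definition mu :: "bool list sstruct \<Rightarrow> bool list sstruct" where
  "mu T = T\<lparr>xs := xs T \<union> {[]}\<rparr>"

definition forest :: "'a sstruct list \<Rightarrow> (nat \<times> 'a) sstruct" where
  "forest Ts = \<lparr>univ = {(i, w). i < length Ts \<and> w \<in> univ (Ts ! i)},
     e0 = {((i, u), (i, w)) | i u w. i < length Ts \<and> (u, w) \<in> e0 (Ts ! i)},
     e1 = {((i, u), (i, w)) | i u w. i < length Ts \<and> (u, w) \<in> e1 (Ts ! i)},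
     xs = {(i, w). i < length Ts \<and> w \<in> xs (Ts ! i)}\<rparr>"

definition P_R :: "nat set \<Rightarrow> bool list sstruct list \<Rightarrow> bool" where
  "P_R R Ts \<longleftrightarrow>
     card {i. i < length Ts \<and> \<not> marked (Ts ! i) \<and> mu (Ts ! i) \<in> set Ts} \<in> R"

end

theory Submission
  imports Defs
begin

text \<open>Fix a non-empty \<open>B \<subseteq> \<mu>(\<T>\<^sub>n)\<close> and consider forests containing \<open>x\<^sub>T \<ge> 1\<close> copies
  of each tree \<open>T\<close> that is unmarked or lies in \<open>B\<close>. On them \<open>P\<^sub>R\<close> says that
  \<open>\<Sum>{x\<^sub>T | T unmarked, \<mu>(T) \<in> B} \<in> R\<close>, every linear counting term evaluates to
  \<open>a\<^sup>\<top>x - c\<close>, and for large \<open>x\<close> the \<open>P\<^sub>\<exists>\<close>-conditions are constant. If no condition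
  \<open>R(t)\<close> of \<open>\<psi>\<close> had exactly the form of \<open>P\<^sub>R\<close>, richness would give \<open>x, y\<close> on which
  all atoms of \<open>\<psi>\<close> agree but \<open>P\<^sub>R\<close> does not. Such a term determines \<open>B\<close>, so distinct
  \<open>B\<close> need distinct conditions.\<close>

lemma piso_refl: "piso A a A a"
  unfolding piso_def by (rule exI[of _ id]) auto

lemma piso_trans:
  assumes "piso A a B b" "piso B b C c" shows "piso A a C c"
proof -
  obtain f where f: "bij_betw f (univ A) (univ B)" "f a = b"
     "\<forall>x\<in>univ A. \<forall>y\<in>univ A. ((x,y) \<in> e0 A \<longleftrightarrow> (f x, f y) \<in> e0 B) \<and> ((x,y) \<in> e1 A \<longleftrightarrow> (f x, f y) \<in> e1 B)"
     "\<forall>x\<in>univ A. x \<in> xs A \<longleftrightarrow> f x \<in> xs B"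
    using assms(1) unfolding piso_def by blast
  obtain g where g: "bij_betw g (univ B) (univ C)" "g b = c"
     "\<forall>x\<in>univ B. \<forall>y\<in>univ B. ((x,y) \<in> e0 B \<longleftrightarrow> (g x, g y) \<in> e0 C) \<and> ((x,y) \<in> e1 B \<longleftrightarrow> (g x, g y) \<in> e1 C)"
     "\<forall>x\<in>univ B. x \<in> xs B \<longleftrightarrow> g x \<in> xs C"
    using assms(2) unfolding piso_def by blast
  have "f x \<in> univ B" if "x \<in> univ A" for x
    using f(1) that bij_betwE by blast
  then show ?thesis unfolding piso_def
    using f g bij_betw_trans[OF f(1) g(1)] by (intro exI[of _ "g \<circ> f"]) auto
qed

lemma count_type_tcls:
  assumes "tcls \<tau> = tcls \<tau>'" shows "count_type A \<tau> = count_type A \<tau>'"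
proof -
  obtain r S c r' S' c' where \<tau>: "\<tau> = (r, S, c)" "\<tau>' = (r', S', c')"
    by (cases \<tau>, cases \<tau>') auto
  have "r = r' \<and> {(S'' :: nat sstruct, c''). piso S'' c'' S c} = {(S'', c''). piso S'' c'' S' c'}"
    using assms by (simp add: \<tau>)
  then have r: "r = r'" and iso: "piso S c S' c'" "piso S' c' S c"
    using piso_refl[of S c] piso_refl[of S' c'] by blast+
  have "piso X y S c = piso X y S' c'" for X :: "'a sstruct" and y
    using piso_trans[OF _ iso(1), of X y] piso_trans[OF _ iso(2), of X y] by (rule iffI)
  then show ?thesis by (simp add: \<tau> r)
qed

subsection \<open>Counting types in a forest\<close>

lemma gaif_forest:
  "((i, u), (j, w)) \<in> gaif (forest Ts) \<longleftrightarrow> i = j \<and> i < length Ts \<and> (u, w) \<in> gaif (Ts ! i)"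
  by (auto simp: gaif_def forest_def)

lemma relpow_gaif_forest:
  "((i, u), (j, w)) \<in> gaif (forest Ts) ^^ k \<longleftrightarrow>
     i = j \<and> (k = 0 \<or> i < length Ts) \<and> (u, w) \<in> gaif (Ts ! i) ^^ k"
proof (induction k arbitrary: j w)
  case (Suc k)
  have "((i, u), (j, w)) \<in> gaif (forest Ts) ^^ Suc k \<longleftrightarrow>
      (\<exists>j' w'. ((i, u), (j', w')) \<in> gaif (forest Ts) ^^ k \<and> ((j', w'), (j, w)) \<in> gaif (forest Ts))"
    by auto
  also have "\<dots> \<longleftrightarrow> (\<exists>w'. i = j \<and> i < length Ts \<and> (u, w') \<in> gaif (Ts ! i) ^^ k \<and> (w', w) \<in> gaif (Ts ! i))"
    using Suc.IH gaif_forest by metis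
  finally show ?case by auto
qed simp

lemma univ_forest: "univ (forest Ts) = {(i, w). i < length Ts \<and> w \<in> univ (Ts ! i)}"
  by (simp add: forest_def)

lemma ball_forest:
  assumes "i < length Ts"
  shows "ball (forest Ts) r (i, w) = Pair i ` ball (Ts ! i) r w"
proof -
  have "y \<in> ball (forest Ts) r (i, w) \<longleftrightarrow> y \<in> Pair i ` ball (Ts ! i) r w" for y
    using assms by (cases y) (auto simp: ball_def relpow_gaif_forest univ_forest)
  then show ?thesis by blast
qed

lemma piso_induced_forest:
  assumes "i < length Ts"
  shows "piso (induced (forest Ts) (Pair i ` S)) (i, w) A c \<longleftrightarrow> piso (induced (Ts ! i) S) w A c"
proof -
  have fwd: "piso (induced (Ts ! i) S) w (induced (forest Ts) (Pair i ` S)) (i, w)"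
    unfolding piso_def using assms
    by (intro exI[of _ "Pair i"]) (auto simp: induced_def forest_def bij_betw_def inj_on_def)
  have bwd: "piso (induced (forest Ts) (Pair i ` S)) (i, w) (induced (Ts ! i) S) w"
    unfolding piso_def using assms
    by (intro exI[of _ snd]) (auto simp: induced_def forest_def bij_betw_def inj_on_def image_iff)
  show ?thesis
    using piso_trans[OF fwd] piso_trans[OF bwd] by (rule iffI)
qed

lemma count_type_forest:
  assumes "\<forall>T\<in>set Ts. finite (univ T)"
  shows "count_type (forest Ts) \<tau> = (\<Sum>T\<leftarrow>Ts. count_type T \<tau>)"
proof -
  obtain r S c where \<tau>: "\<tau> = (r, S, c)" by (cases \<tau>) auto
  define Q where "Q i = {w \<in> univ (Ts ! i). piso (induced (Ts ! i) (ball (Ts ! i) r w)) w S c}" for i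
  have "{y \<in> univ (forest Ts). piso (induced (forest Ts) (ball (forest Ts) r y)) y S c}
     = Sigma {..<length Ts} Q"
    by (auto simp: Q_def univ_forest ball_forest piso_induced_forest)
  then have "count_type (forest Ts) \<tau> = card (Sigma {..<length Ts} Q)"
    by (simp add: \<tau>)
  also have "\<dots> = (\<Sum>i<length Ts. count_type (Ts ! i) \<tau>)"
    using assms by (subst card_SigmaI) (auto simp: Q_def \<tau>)
  finally show ?thesis
    by (simp add: sum_list_sum_nth atLeast0LessThan)
qed

definition weight :: "(nat \<times> otype) list \<Rightarrow> 'a sstruct \<Rightarrow> nat" where
  "weight bs A = (\<Sum>(b, \<tau>)\<leftarrow>bs. b * count_type A \<tau>)"

lemma lval_LSum: "lval A (LSum bs b0) = int (weight bs A) - int b0"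
  by (simp add: weight_def sum_list_of_nat[symmetric] case_prod_unfold o_def)

lemma weight_forest:
  assumes "\<forall>T\<in>set Ts. finite (univ T)"
  shows "weight bs (forest Ts) = (\<Sum>T\<leftarrow>Ts. weight bs T)"
proof (induction bs)
  case (Cons p bs)
  then show ?case
    by (cases p) (simp add: weight_def count_type_forest[OF assms] sum_list_addf sum_list_const_mult)
qed (simp add: weight_def)

lemma weight_tcls:
  assumes "map (map_prod id tcls) bs = map (map_prod id tcls) bs'"
  shows "weight bs A = weight bs' A"
proof -
  define g where "g k = count_type A (SOME \<tau>. tcls \<tau> = k)" for k
  have "count_type A \<tau> = g (tcls \<tau>)" for \<tau>
    unfolding g_def by (rule count_type_tcls) (metis (mono_tags) someI_ex)
  then have eq: "weight cs A = (\<Sum>(b, k)\<leftarrow>map (map_prod id tcls) cs. b * g k)" for cs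
    by (simp add: weight_def o_def case_prod_unfold)
  show ?thesis by (simp only: eq assms)
qed

subsection \<open>Forests with prescribed multiplicities\<close>

definition copies :: "'a list \<Rightarrow> (nat \<Rightarrow> nat) \<Rightarrow> 'a list" where
  "copies L x = concat (map (\<lambda>j. replicate (x j) (L ! j)) [0..<length L])"

definition weights :: "'a sstruct list \<Rightarrow> (nat \<times> otype) list \<Rightarrow> nat \<Rightarrow> nat" where
  "weights L bs j = weight bs (L ! j)"

lemma sum_list_copies: "(\<Sum>T\<leftarrow>copies L x. f T) = (\<Sum>j<length L. x j * f (L ! j))"
proof -
  have "(\<Sum>T\<leftarrow>concat (map (\<lambda>j. replicate (x j) (L ! j)) js). f T) = (\<Sum>j\<leftarrow>js. x j * f (L ! j))"
    for js by (induction js) (auto simp: sum_list_replicate)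
  then show ?thesis
    by (simp add: copies_def interv_sum_list_conv_sum_set_nat atLeast0LessThan)
qed

lemma set_copies_subset: "set (copies L x) \<subseteq> set L"
  by (auto simp: copies_def)

lemma set_copies:
  assumes "\<forall>j<length L. x j \<ge> 1"
  shows "set (copies L x) = set L"
proof -
  have "set (copies L x) = {L ! j | j. j < length L \<and> x j \<noteq> 0}"
    by (auto simp: copies_def)
  then show ?thesis
    using assms by (fastforce simp: in_set_conv_nth)
qed

lemma P_R_copies:
  assumes "\<forall>j<length L. x j \<ge> 1"
  shows "P_R R (copies L x) \<longleftrightarrow>
    (\<Sum>j<length L. x j * (if \<not> marked (L ! j) \<and> mu (L ! j) \<in> set L then 1 else 0)) \<in> R"
proof -
  let ?Q = "\<lambda>T. \<not> marked T \<and> mu T \<in> set L"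
  have "length (filter ?Q Ts) = (\<Sum>T\<leftarrow>Ts. if ?Q T then 1 else 0)" for Ts
    by (induction Ts) auto
  moreover have "card {i. i < length Ts \<and> ?Q (Ts ! i)} = length (filter ?Q Ts)" for Ts
    by (simp add: length_filter_conv_card)
  ultimately show ?thesis
    unfolding P_R_def set_copies[OF assms] by (simp add: sum_list_copies)
qed

lemma lval_forest_copies:
  assumes "\<forall>T\<in>set L. finite (univ T)"
  shows "lval (forest (copies L x)) (LSum bs b0) = dotp (length L) (weights L bs) x - int b0"
proof -
  have "\<forall>T\<in>set (copies L x). finite (univ T)"
    using assms set_copies_subset[of L x] by blast
  then show ?thesis
    unfolding lval_LSum by (simp add: weight_forest sum_list_copies dotp_def weights_def mult.commute)
qed

fun atoms :: "'t hnf \<Rightarrow> (pred \<times> 't lterm) set" where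
  "atoms (Atom p t) = {(p, t)}"
| "atoms (Neg \<phi>) = atoms \<phi>"
| "atoms (Disj \<phi> \<chi>) = atoms \<phi> \<union> atoms \<chi>"

lemma finite_atoms: "finite (atoms \<phi>)"
  by (induction \<phi>) auto

lemma atomsR_eq: "atomsR \<phi> = {t. (PR, t) \<in> atoms \<phi>}"
  by (induction \<phi> rule: atomsR.induct) auto

lemma finite_atomsR: "finite (atomsR \<phi>)"
  using finite_vimageI[OF finite_atoms, of "Pair PR"] by (simp add: atomsR_eq vimage_def inj_on_def)

lemma hsat_cong:
  assumes "\<forall>(p, t)\<in>atoms \<phi>. hsat R A (Atom p t) \<longleftrightarrow> hsat R A' (Atom p t)"
  shows "hsat R A \<phi> \<longleftrightarrow> hsat R A' \<phi>"
  using assms by (induction \<phi>) auto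

fun offset :: "'t lterm \<Rightarrow> nat" where
  "offset (LConst k) = 0"
| "offset (LSum bs b0) = b0"

subsection \<open>Linear forms and richness\<close>

lemma dotp_ge:
  assumes "\<forall>j<s. v \<le> x j" "j < s" "a j \<noteq> 0"
  shows "int v \<le> dotp s a x"
proof -
  have "int v \<le> int (a j) * int (x j)"
    using assms by (simp add: order_trans[OF _ mult_le_mono1, of _ 1] flip: of_nat_mult)
  also have "\<dots> \<le> dotp s a x"
    unfolding dotp_def using assms(2) by (intro member_le_sum) auto
  finally show ?thesis .
qed

lemma dotp_minus_ge_1_iff:
  assumes "b0 < v" "\<forall>j<s. v \<le> x j"
  shows "dotp s a x - int b0 \<ge> 1 \<longleftrightarrow> (\<exists>j<s. a j \<noteq> 0)"
proof (cases "\<exists>j<s. a j \<noteq> 0")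
  case True
  then show ?thesis using dotp_ge[OF assms(2)] assms(1) by force
next
  case False
  then show ?thesis by (simp add: dotp_def)
qed

lemma richE:
  assumes "rich R" "\<forall>j<s. a0 j \<le> 1" "\<exists>j<s. a0 j \<noteq> 0" "finite C"
    and "\<forall>(a, c)\<in>C. (\<exists>j<s. a0 j \<noteq> a j) \<or> c \<noteq> 0"
  obtains x y where "\<forall>j<s. v \<le> x j \<and> v \<le> y j"
    and "inR R (dotp s a0 x) \<longleftrightarrow> \<not> inR R (dotp s a0 y)"
    and "\<forall>(a, c)\<in>C. inR R (dotp s a x - int c) \<longleftrightarrow> inR R (dotp s a y - int c)"
proof -
  obtain cs where cs: "set cs = C"
    using finite_list assms(4) by blast
  define a where "a i = (if i = 0 then a0 else fst (cs ! (i - 1)))" for i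
  define c where "c i = (if i = 0 then 0 else snd (cs ! (i - 1)))" for i
  have "(a i, c i) \<in> C" if "i \<in> {1..length cs}" for i
    using that cs by (auto simp: a_def c_def)
  then have "\<forall>i\<in>{1..length cs}. (\<exists>j<s. a 0 j \<noteq> a i j) \<or> c i \<noteq> 0"
    using assms(5) by (fastforce simp: a_def)
  moreover have "\<forall>j<s. a 0 j \<le> 1" "\<exists>j<s. a 0 j \<noteq> 0"
    using assms(2,3) by (simp_all add: a_def)
  ultimately obtain x y where xy: "\<forall>j<s. v \<le> x j \<and> v \<le> y j"
      "inR R (dotp s (a 0) x) \<longleftrightarrow> \<not> inR R (dotp s (a 0) y)"
      "\<forall>i\<in>{1..length cs}. inR R (dotp s (a i) x - int (c i)) \<longleftrightarrow> inR R (dotp s (a i) y - int (c i))"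
    using assms(1)[unfolded rich_def, rule_format, of s a "length cs" c v] by blast
  have index: "\<exists>i\<in>{1..length cs}. a i = a' \<and> c i = c'" if ac: "(a', c') \<in> C" for a' c'
  proof -
    obtain k where "k < length cs" "cs ! k = (a', c')"
      using ac[folded cs] by (auto simp: in_set_conv_nth)
    then show ?thesis by (intro bexI[of _ "Suc k"]) (auto simp: a_def c_def)
  qed
  show thesis
  proof (rule that[OF xy(1)])
    show "inR R (dotp s a0 x) \<longleftrightarrow> \<not> inR R (dotp s a0 y)"
      using xy(2) by (simp add: a_def)
    show "\<forall>(a', c')\<in>C. inR R (dotp s a' x - int c') \<longleftrightarrow> inR R (dotp s a' y - int c')"
      using xy(3) index by fastforce
  qed
qed

lemma hsat_copies_eq:
  assumes "\<forall>T\<in>set L. finite (univ T)"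
    and "\<forall>(p, t)\<in>atoms \<psi>. offset t < v"
    and "\<forall>j<length L. v \<le> x j \<and> v \<le> y j"
    and "\<forall>bs b0. LSum bs b0 \<in> atomsR \<psi> \<longrightarrow>
      (inR R (dotp (length L) (weights L bs) x - int b0) \<longleftrightarrow>
       inR R (dotp (length L) (weights L bs) y - int b0))"
  shows "hsat R (forest (copies L x)) \<psi> \<longleftrightarrow> hsat R (forest (copies L y)) \<psi>"
proof (rule hsat_cong, clarify)
  fix p t assume pt: "(p, t) \<in> atoms \<psi>"
  show "hsat R (forest (copies L x)) (Atom p t) \<longleftrightarrow> hsat R (forest (copies L y)) (Atom p t)"
  proof (cases t)
    case (LSum bs b0)
    show ?thesis
    proof (cases p)
      case PR
      then have "LSum bs b0 \<in> atomsR \<psi>"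
        using pt LSum by (simp add: atomsR_eq)
      then show ?thesis
        unfolding PR LSum hsat.simps lval_forest_copies[OF assms(1)] using assms(4) by blast
    next
      case PEx
      have "b0 < v" "\<forall>j<length L. v \<le> x j" "\<forall>j<length L. v \<le> y j"
        using assms(2,3) pt LSum by auto
      then show ?thesis
        unfolding PEx LSum hsat.simps lval_forest_copies[OF assms(1)] by (simp add: dotp_minus_ge_1_iff)
    qed
  qed (cases p; simp)
qed

lemma finite_Dn: "finite (Dn n)"
proof -
  have "Dn n = {w. set w \<subseteq> UNIV \<and> length w \<le> 2 ^ n}"
    by (auto simp: Dn_def)
  then show ?thesis
    using finite_lists_length_le[of "UNIV :: bool set"] by simp
qed

lemma finite_Tn: "finite (Tn n)"
proof -
  have "Tn n = tree n ` Pow (Dn n)"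
    by (auto simp: Tn_def)
  then show ?thesis
    using finite_Dn by simp
qed

lemma finite_univ_Tn: "T \<in> Tn n \<Longrightarrow> finite (univ T)"
  using finite_Dn by (auto simp: Tn_def tree_def)

lemma mu_Tn: "T \<in> Tn n \<Longrightarrow> mu T \<in> Tn n"
  by (auto simp: Tn_def mu_def tree_def Dn_def)

lemma marked_mu: "marked (mu T)"
  by (simp add: marked_def mu_def)

lemma ex_unmarked_Tn:
  assumes "T \<in> Tn n"
  obtains T' where "T' \<in> Tn n" "\<not> marked T'" "mu T' = mu T"
proof -
  obtain X where X: "T = tree n X" "X \<subseteq> Dn n"
    using assms by (auto simp: Tn_def)
  show thesis
    by (rule that[of "tree n (X - {[]})"]) (use X in \<open>auto simp: Tn_def marked_def mu_def tree_def\<close>)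
qed

lemma P_R_copies_Tn:
  assumes "set L = {T \<in> Tn n. \<not> marked T \<or> T \<in> B}" "B \<subseteq> mu ` Tn n"
    and "\<forall>j<length L. x j \<ge> 1"
  shows "P_R R (copies L x) \<longleftrightarrow>
    inR R (dotp (length L) (\<lambda>j. if \<not> marked (L ! j) \<and> mu (L ! j) \<in> B then 1 else 0) x)"
proof -
  have "mu (L ! j) \<in> set L \<longleftrightarrow> mu (L ! j) \<in> B" if "j < length L" for j
    using that assms(1,2) mu_Tn marked_mu nth_mem by fastforce
  then show ?thesis
    using assms(3) by (simp add: P_R_copies dotp_def inR_def mult.commute flip: of_nat_mult of_nat_sum)
qed

subsection \<open>Conditions defining a set of marked trees\<close>

definition indicator_term :: "nat \<Rightarrow> bool list sstruct set \<Rightarrow> otype lterm \<Rightarrow> bool" where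
  "indicator_term n B t \<longleftrightarrow> (\<exists>bs. t = LSum bs 0 \<and>
     (\<forall>T\<in>Tn n. \<not> marked T \<longrightarrow> weight bs T = (if mu T \<in> B then 1 else 0)))"

lemma indicator_term_tcls:
  assumes "map_lterm tcls t = map_lterm tcls t'" "indicator_term n B t"
  shows "indicator_term n B t'"
proof -
  obtain bs where bs: "t = LSum bs 0"
      "\<forall>T\<in>Tn n. \<not> marked T \<longrightarrow> weight bs T = (if mu T \<in> B then 1 else 0)"
    using assms(2) unfolding indicator_term_def by blast
  then obtain bs' where t': "t' = LSum bs' 0" "map (map_prod id tcls) bs = map (map_prod id tcls) bs'"
    using assms(1) by (cases t') auto
  then have "weight bs T = weight bs' T" for T :: "bool list sstruct"
    by (intro weight_tcls)
  with bs t'(1) show ?thesis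
    unfolding indicator_term_def by auto
qed

lemma indicator_term_subset:
  assumes "indicator_term n B t" "indicator_term n B' t" "B \<subseteq> mu ` Tn n"
  shows "B \<subseteq> B'"
proof
  fix X assume "X \<in> B"
  then obtain T where T: "T \<in> Tn n" "X = mu T"
    using assms(3) by blast
  then obtain T' where T': "T' \<in> Tn n" "\<not> marked T'" "mu T' = X"
    using ex_unmarked_Tn by metis
  obtain bs where "t = LSum bs 0"
      "\<forall>T\<in>Tn n. \<not> marked T \<longrightarrow> weight bs T = (if mu T \<in> B then 1 else 0)"
      "\<forall>T\<in>Tn n. \<not> marked T \<longrightarrow> weight bs T = (if mu T \<in> B' then 1 else 0)"
    using assms(1,2) unfolding indicator_term_def by auto
  with T' \<open>X \<in> B\<close> show "X \<in> B'"
    by (metis one_neq_zero)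
qed

lemma rich_copies_indistinguishable:
  assumes "rich R" "\<forall>T\<in>set L. finite (univ T)"
    and "\<forall>j<length L. a0 j \<le> 1" "\<exists>j<length L. a0 j \<noteq> 0"
    and "\<forall>bs b0. LSum bs b0 \<in> atomsR \<psi> \<longrightarrow> (\<exists>j<length L. a0 j \<noteq> weights L bs j) \<or> b0 \<noteq> 0"
  obtains x y where "\<forall>j<length L. x j \<ge> 1 \<and> y j \<ge> 1"
    and "inR R (dotp (length L) a0 x) \<longleftrightarrow> \<not> inR R (dotp (length L) a0 y)"
    and "hsat R (forest (copies L x)) \<psi> \<longleftrightarrow> hsat R (forest (copies L y)) \<psi>"
proof -
  define C where "C = (\<lambda>(bs, b0). (weights L bs, b0)) ` (case_prod LSum -` atomsR \<psi>)"
  define v where "v = Suc (Max ((offset \<circ> snd) ` atoms \<psi>))"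
  have "finite C"
    unfolding C_def by (intro finite_imageI finite_vimageI finite_atomsR) (simp add: inj_def)
  moreover have "\<forall>(a, c)\<in>C. (\<exists>j<length L. a0 j \<noteq> a j) \<or> c \<noteq> 0"
    using assms(5) by (auto simp: C_def)
  ultimately obtain x y where xy: "\<forall>j<length L. v \<le> x j \<and> v \<le> y j"
      "inR R (dotp (length L) a0 x) \<longleftrightarrow> \<not> inR R (dotp (length L) a0 y)"
      "\<forall>(a, c)\<in>C. inR R (dotp (length L) a x - int c) \<longleftrightarrow> inR R (dotp (length L) a y - int c)"
    using richE[OF assms(1,3,4)] by blast
  have "hsat R (forest (copies L x)) \<psi> \<longleftrightarrow> hsat R (forest (copies L y)) \<psi>"
  proof (rule hsat_copies_eq[OF assms(2) _ xy(1)])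
    show "\<forall>(p, t)\<in>atoms \<psi>. offset t < v"
      using finite_atoms by (force simp: v_def less_Suc_eq_le intro: Max_ge)
    show "\<forall>bs b0. LSum bs b0 \<in> atomsR \<psi> \<longrightarrow>
        (inR R (dotp (length L) (weights L bs) x - int b0) \<longleftrightarrow>
         inR R (dotp (length L) (weights L bs) y - int b0))"
    proof (intro allI impI)
      fix bs b0 assume "LSum bs b0 \<in> atomsR \<psi>"
      then have "(weights L bs, b0) \<in> C"
        unfolding C_def by (intro image_eqI[of _ _ "(bs, b0)"]) auto
      then show "inR R (dotp (length L) (weights L bs) x - int b0) \<longleftrightarrow>
          inR R (dotp (length L) (weights L bs) y - int b0)"
        using xy(3) by fast
    qed
  qed
  moreover have "\<forall>j<length L. x j \<ge> 1 \<and> y j \<ge> 1"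
    using xy(1) by (force simp: v_def)
  ultimately show thesis
    using that xy(2) by blast
qed

lemma ex_indicator_atom:
  assumes "rich R"
    and equiv: "\<forall>Ts. set Ts \<subseteq> Tn n \<longrightarrow> (hsat R (forest Ts) \<psi> \<longleftrightarrow> P_R R Ts)"
    and B: "B \<subseteq> mu ` Tn n" "B \<noteq> {}"
  shows "\<exists>t\<in>atomsR \<psi>. indicator_term n B t"
proof (rule ccontr)
  assume none: "\<not> ?thesis"
  obtain L where L: "set L = {T \<in> Tn n. \<not> marked T \<or> T \<in> B}"
    using finite_list[of "{T \<in> Tn n. \<not> marked T \<or> T \<in> B}"] finite_Tn by auto
  define a0 where "a0 = (\<lambda>j. if \<not> marked (L ! j) \<and> mu (L ! j) \<in> B then 1 else 0 :: nat)"
  have L_sub: "set L \<subseteq> Tn n"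
    using L by simp
  have in_L: "T \<in> set L" if "T \<in> Tn n" "\<not> marked T" for T
    using that L by simp
  have a0_le: "\<forall>j<length L. a0 j \<le> 1"
    by (simp add: a0_def)
  have a0_nonzero: "\<exists>j<length L. a0 j \<noteq> 0"
  proof -
    obtain T where "T \<in> Tn n" "mu T \<in> B"
      using B by blast
    then obtain T' where "T' \<in> Tn n" "\<not> marked T'" "mu T' \<in> B"
      using ex_unmarked_Tn by metis
    then show ?thesis
      using in_L by (auto simp: a0_def in_set_conv_nth)
  qed
  have a0_not_atom: "\<forall>bs b0. LSum bs b0 \<in> atomsR \<psi> \<longrightarrow> (\<exists>j<length L. a0 j \<noteq> weights L bs j) \<or> b0 \<noteq> 0"
  proof (intro allI impI)
    fix bs b0 assume atom: "LSum bs b0 \<in> atomsR \<psi>"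
    show "(\<exists>j<length L. a0 j \<noteq> weights L bs j) \<or> b0 \<noteq> 0"
    proof (rule ccontr)
      assume "\<not> ?thesis"
      then have "indicator_term n B (LSum bs b0)"
        using in_L by (fastforce simp: indicator_term_def a0_def weights_def in_set_conv_nth)
      with none atom show False by blast
    qed
  qed
  have "\<forall>T\<in>set L. finite (univ T)"
    using L_sub finite_univ_Tn by blast
  then obtain x y where xy: "\<forall>j<length L. x j \<ge> 1 \<and> y j \<ge> 1"
      "inR R (dotp (length L) a0 x) \<longleftrightarrow> \<not> inR R (dotp (length L) a0 y)"
      "hsat R (forest (copies L x)) \<psi> \<longleftrightarrow> hsat R (forest (copies L y)) \<psi>"
    using rich_copies_indistinguishable[OF \<open>rich R\<close> _ a0_le a0_nonzero a0_not_atom] by blast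
  have "set (copies L z) \<subseteq> Tn n" for z
    using set_copies_subset L_sub by (rule order_trans)
  with equiv xy(3) have "P_R R (copies L x) \<longleftrightarrow> P_R R (copies L y)"
    by blast
  then show False
    using xy(1,2) P_R_copies_Tn[OF L B(1)] by (simp add: a0_def)
qed

theorem lemma6p5:
  fixes R :: "nat set" and n :: nat and \<psi> :: "otype hnf"
  assumes "rich R"
    and "wf_hnf \<psi>"
    and "\<forall>Ts. set Ts \<subseteq> Tn n \<longrightarrow> (hsat R (forest Ts) \<psi> \<longleftrightarrow> P_R R Ts)"
  shows "card {B. B \<subseteq> mu ` Tn n \<and> B \<noteq> {}} \<le> num_R_conditions \<psi>"
proof -
  define S where "S = {B. B \<subseteq> mu ` Tn n \<and> B \<noteq> {}}"
  have "\<forall>B\<in>S. \<exists>u. u \<in> atomsR \<psi> \<and> indicator_term n B u"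
    using ex_indicator_atom[OF assms(1,3)] by (auto simp: S_def)
  from bchoice[OF this] obtain t where t: "\<forall>B\<in>S. t B \<in> atomsR \<psi> \<and> indicator_term n B (t B)"
    by blast
  have "B \<subseteq> B'" if "B \<in> S" "B' \<in> S" "map_lterm tcls (t B) = map_lterm tcls (t B')" for B B'
  proof (rule indicator_term_subset)
    show "indicator_term n B (t B)" "indicator_term n B' (t B)"
      using t that indicator_term_tcls[OF that(3)[symmetric]] by auto
    show "B \<subseteq> mu ` Tn n"
      using that(1) by (simp add: S_def)
  qed
  then have "inj_on (map_lterm tcls \<circ> t) S"
    by (intro inj_onI) (simp add: subset_antisym)
  moreover have "(map_lterm tcls \<circ> t) ` S \<subseteq> map_lterm tcls ` atomsR \<psi>"
    using t by auto
  ultimately have "card S \<le> card (map_lterm tcls ` atomsR \<psi>)"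
    by (intro card_inj_on_le finite_imageI finite_atomsR)
  then show ?thesis
    by (simp add: S_def num_R_conditions_def)
qed

end
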